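(* Let $G=(V,E)$ be a finite connected graph (loops allowed) and let $W_0=(G,w^0)$ and $W_1=(G,w^1)$ be two networks on $G$ such that there is a vertex $v\in V$ with $w^0_{v,v}<w^1_{v,v}$, and $w^0_{u,x}=w^1_{u,x}$ for every other edge $(u,x)\neq(v,v)$. Denote by $\gamma^0$ and $\gamma^1$ the spectral gaps of the random walks on $W_0$ and $W_1$ respectively. Then $\gamma^1\le\gamma^0$.
   Context: A network $(G,w)$ is a connected graph with nonnegative edge weights $w$ (including possibly weights $w_{v,v}$ on self-loops). The random walk on it moves from $u$ to $x$ with probability proportional to $w_{u,x}$; its stationary distribution is $\pi(u)=w_u/Z$ with $w_u=\sum_{e\ni u}w_e$ and $Z=\sum_u w_u$. The spectral gap is $1-\lambda_2$, where $\lambda_2$ is the second largest eigenvalue of the (reversible) transition matrix. *)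

theory Defs
  imports "HOL-Analysis.Analysis" "HOL-Computational_Algebra.Polynomial"
begin

text \<open>The underlying graph has an edge
  {u,x} iff w u x > 0; it is required to be connected.\<close>
definition network :: "('a::finite \<Rightarrow> 'a \<Rightarrow> real) \<Rightarrow> bool" where
  "network w \<longleftrightarrow> (\<forall>u x. w u x = w x u) \<and> (\<forall>u x. 0 \<le> w u x) \<and>
     (\<forall>u x. (\<lambda>a b. a \<noteq> b \<and> 0 < w a b)\<^sup>*\<^sup>* u x)"

text \<open>w_u = sum of weights of edges containing u (a loop counted once).\<close>
definition wdeg :: "('a::finite \<Rightarrow> 'a \<Rightarrow> real) \<Rightarrow> 'a \<Rightarrow> real" where
  "wdeg w u = (\<Sum>x\<in>UNIV. w u x)"

definition trans_mat :: "('a::finite \<Rightarrow> 'a \<Rightarrow> real) \<Rightarrow> real^'a^'a" where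
  "trans_mat w = (\<chi> u x. w u x / wdeg w u)"

definition charpoly :: "real^'n^'n \<Rightarrow> real poly" where
  "charpoly A = det (\<chi> i j. (if i = j then [:0, 1:] else 0) - [:A $ i $ j:])"

text \<open>Second largest eigenvalue, counted with (algebraic) multiplicity:
  the largest eigenvalue \<lambda> such that the eigenvalues \<ge> \<lambda> have total multiplicity \<ge> 2.\<close>
definition second_eigenvalue :: "real^'n^'n \<Rightarrow> real" where
  "second_eigenvalue A = Max {l. poly (charpoly A) l = 0 \<and>
      2 \<le> (\<Sum>\<mu>\<in>{\<mu>. poly (charpoly A) \<mu> = 0 \<and> l \<le> \<mu>}. order \<mu> (charpoly A))}"

definition spectral_gap :: "('a::finite \<Rightarrow> 'a \<Rightarrow> real) \<Rightarrow> real" where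
  "spectral_gap w = 1 - second_eigenvalue (trans_mat w)"

end

theory Submission
  imports Defs
begin

text \<open>The transition matrix P = D^-1 W is similar to the symmetric matrix D^-1/2 W D^-1/2, so by
  the spectral theorem it has an eigenbasis that is orthonormal for the degree inner product
  <f, g>_D = \<Sum>u. w_u f(u) g(u). This gives both halves of the Courant-Fischer description of
  the second eigenvalue: some plane of functions g has Rayleigh quotient <g, W g> / <g, g>_D at
  least \<lambda>_2, and every plane contains some g \<noteq> 0 with quotient at most \<lambda>_2. Raising the loop
  weight at v by t > 0 adds t g(v)^2 to numerator and denominator alike; as \<lambda>_2 \<le> 1, the
  quotient for W_1 therefore stays at least \<lambda>_2(W_0) on the plane chosen for W_0, so
  \<lambda>_2(W_1) \<ge> \<lambda>_2(W_0).\<close>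

definition diag_mat :: "('n \<Rightarrow> 'a::zero) \<Rightarrow> 'a^'n^'n" where
  "diag_mat d = (\<chi> i j. if i = j then d i else 0)"

lemma diag_mat_nth: "diag_mat d $ i $ j = (if i = j then d i else 0)"
  by (simp add: diag_mat_def)

lemma diag_mat_mult_nth [simp]:
  fixes A :: "'a::semiring_1^'m^'n"
  shows "(diag_mat d ** A) $ i $ j = d i * A $ i $ j"
  by (simp add: diag_mat_def matrix_matrix_mult_def if_distrib[of "\<lambda>x. x * _"] cong: if_cong)

lemma mult_diag_mat_nth [simp]:
  fixes A :: "'a::semiring_1^'n^'m"
  shows "(A ** diag_mat d) $ i $ j = A $ i $ j * d j"
  by (simp add: diag_mat_def matrix_matrix_mult_def if_distrib[of "times _"] cong: if_cong)

lemma symmetric_matrix_inner: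
  fixes S :: "real^'n^'n"
  assumes "transpose S = S"
  shows "(S *v x) \<bullet> y = x \<bullet> (S *v y)"
  by (metis assms dot_lmul_matrix vector_transpose_matrix)

lemma nonneg_linear_coeff_eq_0:
  fixes a c :: real
  assumes "a \<ge> 0" and "\<And>t. 2 * t * a + t\<^sup>2 * c \<le> 0"
  shows "a = 0"
proof (rule ccontr)
  assume "a \<noteq> 0"
  with assms(1) have "a > 0" by simp
  define t where "t = a / (\<bar>c\<bar> + 1)"
  have "t > 0" "t * \<bar>c\<bar> < a"
    using \<open>a > 0\<close> by (simp_all add: t_def field_simps)
  moreover have "t * (2 * a + t * c) \<le> 0"
    using assms(2)[of t] by (simp add: power2_eq_square algebra_simps)
  ultimately have "2 * a + t * c \<le> 0" by (simp add: mult_le_0_iff)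
  moreover have "- (t * \<bar>c\<bar>) \<le> t * c"
    using mult_left_mono[of "- \<bar>c\<bar>" c t] \<open>t > 0\<close> by simp
  ultimately show False using \<open>t * \<bar>c\<bar> < a\<close> \<open>a > 0\<close> by linarith
qed

lemma symmetric_matrix_eigenvector_in_subspace:
  fixes S :: "real^'n^'n"
  assumes sym: "transpose S = S" and W: "subspace W" "W \<noteq> {0}"
    and inv: "\<And>x. x \<in> W \<Longrightarrow> S *v x \<in> W"
  obtains x m where "x \<in> W" "norm x = 1" "S *v x = m *\<^sub>R x"
proof -
  define K where "K = W \<inter> sphere 0 1"
  have unit_in_K: "(1 / norm z) *\<^sub>R z \<in> K" if "z \<in> W" "z \<noteq> 0" for z
    using that W(1) by (simp add: K_def subspace_scale)
  have "compact K"
    unfolding K_def using W(1) by (intro closed_Int_compact closed_subspace) auto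
  moreover from W obtain z where "z \<in> W" "z \<noteq> 0" by (auto simp: subspace_0)
  then have "K \<noteq> {}" using unit_in_K by blast
  moreover have "continuous_on K (\<lambda>x. x \<bullet> (S *v x))"
    by (intro continuous_intros)
  ultimately have "\<exists>x\<in>K. \<forall>y\<in>K. y \<bullet> (S *v y) \<le> x \<bullet> (S *v x)"
    by (rule continuous_attains_sup)
  then obtain x where "x \<in> K" and x_max: "\<And>y. y \<in> K \<Longrightarrow> y \<bullet> (S *v y) \<le> x \<bullet> (S *v x)"
    by blast
  define m where "m = x \<bullet> (S *v x)"
  have "x \<in> W" "norm x = 1" "x \<bullet> x = 1"
    using \<open>x \<in> K\<close> by (auto simp: K_def norm_eq_1)
  have Rayleigh: "z \<bullet> (S *v z) \<le> m * (z \<bullet> z)" if "z \<in> W" for z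
  proof (cases "z = 0")
    case False
    have "((1 / norm z) *\<^sub>R z) \<bullet> (S *v ((1 / norm z) *\<^sub>R z)) \<le> m"
      unfolding m_def using unit_in_K[OF that False] by (rule x_max)
    then have "(z \<bullet> (S *v z)) / (norm z)\<^sup>2 \<le> m"
      by (simp add: matrix_vector_mult_scaleR power2_eq_square)
    with False show ?thesis by (simp add: divide_le_eq power2_norm_eq_inner)
  qed simp
  define r where "r = S *v x - m *\<^sub>R x"
  have "r \<in> W"
    unfolding r_def using W(1) \<open>x \<in> W\<close> inv by (intro subspace_diff subspace_scale) auto
  \<comment> \<open>The Rayleigh quotient is maximal at x, so it has no first-order variation in the direction r.\<close>
  have "2 * t * (r \<bullet> r) + t\<^sup>2 * (r \<bullet> (S *v r) - m * (r \<bullet> r)) \<le> 0" for t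
  proof -
    have "x + t *\<^sub>R r \<in> W"
      using W(1) \<open>x \<in> W\<close> \<open>r \<in> W\<close> by (intro subspace_add subspace_scale) auto
    then have "(x + t *\<^sub>R r) \<bullet> (S *v (x + t *\<^sub>R r)) \<le> m * ((x + t *\<^sub>R r) \<bullet> (x + t *\<^sub>R r))"
      by (rule Rayleigh)
    moreover have "x \<bullet> (S *v r) = r \<bullet> (S *v x)"
      using symmetric_matrix_inner[OF sym, of r x] by (simp add: inner_commute)
    then have "(x + t *\<^sub>R r) \<bullet> (S *v (x + t *\<^sub>R r)) =
        m + 2 * t * (r \<bullet> (S *v x)) + t\<^sup>2 * (r \<bullet> (S *v r))"
      by (simp add: m_def matrix_vector_right_distrib matrix_vector_mult_scaleR inner_add_left
          inner_add_right power2_eq_square algebra_simps)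
    moreover have "(x + t *\<^sub>R r) \<bullet> (x + t *\<^sub>R r) = 1 + 2 * t * (r \<bullet> x) + t\<^sup>2 * (r \<bullet> r)"
      using \<open>x \<bullet> x = 1\<close>
      by (simp add: inner_add_left inner_add_right power2_eq_square inner_commute)
    ultimately have "m + 2 * t * (r \<bullet> (S *v x)) + t\<^sup>2 * (r \<bullet> (S *v r))
        \<le> m * (1 + 2 * t * (r \<bullet> x) + t\<^sup>2 * (r \<bullet> r))"
      by (simp only:)
    moreover have "r \<bullet> (S *v x) = r \<bullet> r + m * (r \<bullet> x)"
      by (simp add: r_def inner_diff_left inner_diff_right inner_commute algebra_simps)
    ultimately show ?thesis
      by (simp add: algebra_simps)
  qed
  moreover have "r \<bullet> (S *v r) - m * (r \<bullet> r) \<le> 0"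
    using Rayleigh[OF \<open>r \<in> W\<close>] by simp
  ultimately have "r \<bullet> r = 0"
    by (intro nonneg_linear_coeff_eq_0) auto
  then have "S *v x = m *\<^sub>R x" by (simp add: r_def)
  with \<open>x \<in> W\<close> \<open>norm x = 1\<close> show thesis by (rule that)
qed

lemma symmetric_matrix_orthonormal_eigenvectors:
  fixes S :: "real^'n^'n"
  assumes sym: "transpose S = S"
  shows "k \<le> CARD('n) \<Longrightarrow> \<exists>B. finite B \<and> card B = k \<and> pairwise orthogonal B \<and>
           (\<forall>b\<in>B. norm b = 1 \<and> (\<exists>m. S *v b = m *\<^sub>R b))"
proof (induction k)
  case 0
  show ?case by (intro exI[of _ "{}"]) auto
next
  case (Suc k)
  then obtain B where "finite B" "card B = k" "pairwise orthogonal B"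
    and B_eigen: "\<forall>b\<in>B. norm b = 1 \<and> (\<exists>m. S *v b = m *\<^sub>R b)"
    by auto
  define W where "W = {y. \<forall>b\<in>B. orthogonal b y}"
  have "subspace W"
    unfolding W_def by (rule subspace_orthogonal_to_vectors)
  have "dim B < DIM(real^'n)"
    using dim_le_card[OF order.refl \<open>finite B\<close>] \<open>card B = k\<close> Suc.prems by simp
  then obtain z where "z \<noteq> 0" "\<And>y. y \<in> span B \<Longrightarrow> orthogonal z y"
    using orthogonal_to_subspace_exists by blast
  then have "z \<in> W"
    by (auto simp: W_def orthogonal_commute span_base)
  with \<open>z \<noteq> 0\<close> have "W \<noteq> {0}" by blast
  have "S *v y \<in> W" if "y \<in> W" for y
  proof -
    have "b \<bullet> (S *v y) = 0" if "b \<in> B" for b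
    proof -
      obtain m where "S *v b = m *\<^sub>R b" using B_eigen \<open>b \<in> B\<close> by blast
      then show ?thesis
        using symmetric_matrix_inner[OF sym, of b y] \<open>y \<in> W\<close> \<open>b \<in> B\<close>
        by (simp add: W_def orthogonal_def)
    qed
    then show ?thesis by (simp add: W_def orthogonal_def)
  qed
  with sym \<open>subspace W\<close> \<open>W \<noteq> {0}\<close> obtain x m where "x \<in> W" "norm x = 1" "S *v x = m *\<^sub>R x"
    by (rule symmetric_matrix_eigenvector_in_subspace)
  have "x \<notin> B"
    using \<open>x \<in> W\<close> \<open>norm x = 1\<close> by (auto simp: W_def orthogonal_def norm_eq_1)
  show ?case
  proof (intro exI[of _ "insert x B"] conjI)
    show "card (insert x B) = Suc k"
      using \<open>finite B\<close> \<open>card B = k\<close> \<open>x \<notin> B\<close> by simp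
    show "pairwise orthogonal (insert x B)"
      using \<open>pairwise orthogonal B\<close> \<open>x \<in> W\<close>
      by (auto simp: W_def pairwise_insert orthogonal_commute)
  qed (use \<open>finite B\<close> B_eigen \<open>norm x = 1\<close> \<open>S *v x = m *\<^sub>R x\<close> in auto)
qed

theorem symmetric_matrix_diagonalization:
  fixes S :: "real^'n^'n"
  assumes sym: "transpose S = S"
  obtains H \<mu> where "orthogonal_matrix H" "S = H ** diag_mat \<mu> ** transpose H"
proof -
  obtain B where "finite B" "card B = CARD('n)" "pairwise orthogonal B"
    and B_eigen: "\<forall>b\<in>B. norm b = 1 \<and> (\<exists>m. S *v b = m *\<^sub>R b)"
    using symmetric_matrix_orthonormal_eigenvectors[OF sym order.refl] by blast
  then obtain f where f: "bij_betw f (UNIV :: 'n set) B"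
    using finite_same_card_bij[of "UNIV :: 'n set" B] by auto
  define \<mu> where "\<mu> i = (SOME m. S *v f i = m *\<^sub>R f i)" for i
  define H :: "real^'n^'n" where "H = (\<chi> u i. f i $ u)"
  have f_in_B: "f i \<in> B" for i
    using f by (auto simp: bij_betw_def)
  have eigen: "S *v f i = \<mu> i *\<^sub>R f i" for i
    unfolding \<mu>_def using B_eigen f_in_B[of i] by (metis (mono_tags, lifting) someI_ex)
  have column_H: "column i H = f i" for i
    by (simp add: H_def column_def vec_eq_iff)
  have "orthogonal_matrix H"
    unfolding orthogonal_matrix_orthonormal_columns column_H
  proof (intro conjI allI impI)
    show "norm (f i) = 1" for i
      using B_eigen f_in_B by blast
    show "orthogonal (f i) (f j)" if "i \<noteq> j" for i j
      using f that by (intro pairwiseD[OF \<open>pairwise orthogonal B\<close>] f_in_B) (auto simp: bij_betw_def inj_on_def)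
  qed
  have "S ** H = H ** diag_mat \<mu>"
  proof -
    have "(S ** H) $ u $ i = (S *v f i) $ u" for u i
      by (simp add: H_def matrix_matrix_mult_def matrix_vector_mult_def)
    then show ?thesis
      by (simp add: vec_eq_iff eigen H_def mult.commute)
  qed
  then have "S = H ** diag_mat \<mu> ** transpose H"
    using \<open>orthogonal_matrix H\<close>
    by (metis matrix_mul_assoc matrix_mul_rid orthogonal_matrix_def)
  with \<open>orthogonal_matrix H\<close> show thesis by (rule that)
qed

lemma poly_det: "poly (det (M :: real poly^'n^'n)) x = det (\<chi> i j. poly (M $ i $ j) x)"
  unfolding det_def by (simp add: poly_sum poly_prod)

lemma poly_charpoly: "poly (charpoly A) x = det (mat x - A)"
  unfolding charpoly_def poly_det by (rule arg_cong[where f = det]) (simp add: vec_eq_iff mat_def)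

lemma det_conjugate:
  fixes M N A :: "real^'n^'n"
  assumes "M ** N = mat 1"
  shows "det (M ** A ** N) = det A"
proof -
  have "det (M ** A ** N) = det A * (det M * det N)"
    by (simp add: det_mul mult_ac)
  also have "det M * det N = 1"
    using det_mul[of M N] assms by simp
  finally show ?thesis by simp
qed

lemma charpoly_diagonalizable:
  fixes M N A :: "real^'n^'n"
  assumes inverse: "M ** N = mat 1" and A: "A = M ** diag_mat \<mu> ** N"
  shows "charpoly A = (\<Prod>i\<in>UNIV. [:- \<mu> i, 1:])"
proof (rule poly_ext)
  fix x
  have entry: "(M ** diag_mat d ** N) $ u $ v = (\<Sum>k\<in>UNIV. M $ u $ k * d k * N $ k $ v)" for d u v
    unfolding matrix_matrix_mult_def[of "M ** diag_mat d"] by simp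
  have inverse_entry: "(\<Sum>k\<in>UNIV. M $ u $ k * N $ k $ v) = (if u = v then 1 else 0)" for u v
    using arg_cong[OF inverse, of "\<lambda>B. B $ u $ v"] by (simp add: matrix_matrix_mult_def mat_def)
  have "(M ** diag_mat (\<lambda>i. x - \<mu> i) ** N) $ u $ v = (mat x - A) $ u $ v" for u v
  proof -
    have "(M ** diag_mat (\<lambda>i. x - \<mu> i) ** N) $ u $ v
        = x * (\<Sum>k\<in>UNIV. M $ u $ k * N $ k $ v) - (\<Sum>k\<in>UNIV. M $ u $ k * \<mu> k * N $ k $ v)"
      unfolding entry by (simp add: sum_subtractf sum_distrib_left algebra_simps)
    also have "\<dots> = (mat x - A) $ u $ v"
      by (simp add: inverse_entry A entry mat_def)
    finally show ?thesis .
  qed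
  then have "mat x - A = M ** diag_mat (\<lambda>i. x - \<mu> i) ** N"
    by (simp add: vec_eq_iff)
  then have "det (mat x - A) = det (diag_mat (\<lambda>i. x - \<mu> i) :: real^'n^'n)"
    using det_conjugate[OF inverse] by simp
  also have "\<dots> = (\<Prod>i\<in>UNIV. x - \<mu> i)"
    by (subst det_diagonal) (auto simp: diag_mat_def)
  finally show "poly (charpoly A) x = poly (\<Prod>i\<in>UNIV. [:- \<mu> i, 1:]) x"
    by (simp add: poly_charpoly poly_prod)
qed

lemma order_linear_factor: "order l [:- a, 1:] = (if l = a then 1 else 0)" for a l :: real
proof (cases "l = a")
  case True
  then show ?thesis using order_power_n_n[of a 1] by simp
next
  case False
  then have "poly [:- a, 1:] l \<noteq> 0" by simp
  with False show ?thesis by (simp add: order_0I)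
qed

lemma order_prod_linear_factors:
  fixes \<mu> :: "'i \<Rightarrow> real"
  assumes "finite I"
  shows "order l (\<Prod>i\<in>I. [:- \<mu> i, 1:]) = card {i\<in>I. \<mu> i = l}"
  using assms
proof (induction I rule: finite_induct)
  case (insert j I)
  have "(\<Prod>i\<in>insert j I. [:- \<mu> i, 1:]) \<noteq> 0"
    using insert.hyps(1) by (subst prod_zero_iff) auto
  then have "order l (\<Prod>i\<in>insert j I. [:- \<mu> i, 1:])
      = order l [:- \<mu> j, 1:] + order l (\<Prod>i\<in>I. [:- \<mu> i, 1:])"
    using insert.hyps by (simp add: order_mult del: mult_pCons_left)
  also have "\<dots> = card {i\<in>insert j I. \<mu> i = l}"
  proof -
    have "{i\<in>insert j I. \<mu> i = l} = (if \<mu> j = l then insert j {i\<in>I. \<mu> i = l} else {i\<in>I. \<mu> i = l})"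
      by auto
    then show ?thesis
      using insert by (simp add: order_linear_factor)
  qed
  finally show ?case .
qed simp

lemma second_eigenvalue_eq_Max:
  fixes A :: "real^'n^'n" and \<mu> :: "'n \<Rightarrow> real"
  assumes "charpoly A = (\<Prod>i\<in>UNIV. [:- \<mu> i, 1:])"
  shows "second_eigenvalue A = Max {l\<in>range \<mu>. 2 \<le> card {i. l \<le> \<mu> i}}"
proof -
  have root: "poly (charpoly A) l = 0 \<longleftrightarrow> l \<in> range \<mu>" for l
    by (auto simp: assms poly_prod prod_zero_iff)
  have order: "order m (charpoly A) = card {i. \<mu> i = m}" for m
    by (simp add: assms order_prod_linear_factors)
  have "(\<Sum>m\<in>{m\<in>range \<mu>. l \<le> m}. order m (charpoly A)) = card {i. l \<le> \<mu> i}" for l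
  proof -
    have "(\<Sum>m\<in>{m\<in>range \<mu>. l \<le> m}. card {i\<in>{i. l \<le> \<mu> i}. \<mu> i = m}) = card {i. l \<le> \<mu> i}"
      using sum.group[of "{i. l \<le> \<mu> i}" "{m\<in>range \<mu>. l \<le> m}" \<mu> "\<lambda>_. 1 :: nat"] by auto
    moreover have "{i\<in>{i. l \<le> \<mu> i}. \<mu> i = m} = {i. \<mu> i = m}" if "l \<le> m" for m
      using that by auto
    ultimately show ?thesis
      by (simp add: order)
  qed
  then show ?thesis
    unfolding second_eigenvalue_def by (simp add: root)
qed

lemma second_eigenvalue_attained:
  fixes A :: "real^'n^'n" and \<mu> :: "'n \<Rightarrow> real"
  assumes "charpoly A = (\<Prod>i\<in>UNIV. [:- \<mu> i, 1:])" and "CARD('n) \<ge> 2"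
  obtains i j where "i \<noteq> j" "second_eigenvalue A \<le> \<mu> i" "second_eigenvalue A \<le> \<mu> j"
proof -
  define T where "T = {l\<in>range \<mu>. 2 \<le> card {i. l \<le> \<mu> i}}"
  have "Min (range \<mu>) \<in> range \<mu>"
    by (rule Min_in) auto
  then obtain i\<^sub>0 where "Min (range \<mu>) = \<mu> i\<^sub>0"
    by (rule rangeE)
  then have "{i. \<mu> i\<^sub>0 \<le> \<mu> i} = UNIV"
    by (auto simp flip: \<open>Min (range \<mu>) = \<mu> i\<^sub>0\<close>)
  with assms(2) have "\<mu> i\<^sub>0 \<in> T"
    by (simp add: T_def)
  then have "Max T \<in> T"
    unfolding T_def by (intro Max_in) auto
  then have "\<not> card {i. Max T \<le> \<mu> i} \<le> 1"
    by (simp add: T_def)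
  then obtain i j where "i \<noteq> j" "Max T \<le> \<mu> i" "Max T \<le> \<mu> j"
    by (auto simp: card_le_Suc0_iff_eq)
  then show thesis
    using that second_eigenvalue_eq_Max[OF assms(1)] by (simp add: T_def)
qed

lemma min_le_second_eigenvalue:
  fixes A :: "real^'n^'n" and \<mu> :: "'n \<Rightarrow> real"
  assumes "charpoly A = (\<Prod>i\<in>UNIV. [:- \<mu> i, 1:])" and "i \<noteq> j"
  shows "min (\<mu> i) (\<mu> j) \<le> second_eigenvalue A"
proof -
  have "card {i, j} \<le> card {k. min (\<mu> i) (\<mu> j) \<le> \<mu> k}"
    by (intro card_mono) auto
  with assms(2) have "min (\<mu> i) (\<mu> j) \<in> {l\<in>range \<mu>. 2 \<le> card {k. l \<le> \<mu> k}}"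
    by (simp add: min_def)
  then show ?thesis
    unfolding second_eigenvalue_eq_Max[OF assms(1)] by (intro Max_ge) auto
qed

definition deg_inner :: "('a::finite \<Rightarrow> 'a \<Rightarrow> real) \<Rightarrow> ('a \<Rightarrow> real) \<Rightarrow> ('a \<Rightarrow> real) \<Rightarrow> real" where
  "deg_inner w f g = (\<Sum>u\<in>UNIV. wdeg w u * f u * g u)"

definition adj_form :: "('a::finite \<Rightarrow> 'a \<Rightarrow> real) \<Rightarrow> ('a \<Rightarrow> real) \<Rightarrow> real" where
  "adj_form w g = (\<Sum>u\<in>UNIV. \<Sum>x\<in>UNIV. w u x * g u * g x)"

lemma inner_diagonalized:
  fixes H :: "real^'n^'n"
  shows "y \<bullet> ((H ** diag_mat \<mu> ** transpose H) *v y) = (\<Sum>i\<in>UNIV. \<mu> i * ((transpose H *v y) $ i)\<^sup>2)"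
proof -
  have "y \<bullet> ((H ** diag_mat \<mu> ** transpose H) *v y) = (transpose H *v y) \<bullet> (diag_mat \<mu> *v (transpose H *v y))"
    by (simp add: matrix_vector_mul_assoc[symmetric] dot_lmul_matrix[symmetric])
  then show ?thesis
    by (simp add: inner_vec_def matrix_vector_mult_def diag_mat_def if_distrib[of "\<lambda>x. x * _"]
        power2_eq_square mult_ac cong: if_cong)
qed

lemma deg_inner_linear_right:
  "deg_inner w f (\<lambda>u. a * g u + b * h u) = a * deg_inner w f g + b * deg_inner w f h"
  by (simp add: deg_inner_def sum_distrib_left sum.distrib algebra_simps)

lemma network_spectral_decomposition:
  fixes w :: "'a::finite \<Rightarrow> 'a \<Rightarrow> real"
  assumes sym: "\<And>u x. w u x = w x u" and pos: "\<And>u. wdeg w u > 0"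
  obtains \<mu> :: "'a \<Rightarrow> real" and e :: "'a \<Rightarrow> 'a \<Rightarrow> real" where
    "charpoly (trans_mat w) = (\<Prod>i\<in>UNIV. [:- \<mu> i, 1:])"
    "\<And>i j. deg_inner w (e i) (e j) = (if i = j then 1 else 0)"
    "\<And>g. adj_form w g = (\<Sum>i\<in>UNIV. \<mu> i * (deg_inner w (e i) g)\<^sup>2)"
    "\<And>g. deg_inner w g g = (\<Sum>i\<in>UNIV. (deg_inner w (e i) g)\<^sup>2)"
proof -
  define s where "s u = sqrt (wdeg w u)" for u
  have "s u \<noteq> 0" "s u * s u = wdeg w u" for u
    using pos[of u] by (simp_all add: s_def)
  note s = this
  define S :: "real^'a^'a" where "S = (\<chi> u x. w u x / (s u * s x))"
  have "transpose S = S"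
    by (simp add: S_def transpose_def vec_eq_iff sym mult.commute)
  then obtain H \<mu> where "orthogonal_matrix H" and S_diag: "S = H ** diag_mat \<mu> ** transpose H"
    by (rule symmetric_matrix_diagonalization)
  then have HH: "H ** transpose H = mat 1" "transpose H ** H = mat 1"
    by (simp_all add: orthogonal_matrix_def)
  define C C' :: "real^'a^'a" where "C = diag_mat (\<lambda>u. 1 / s u)" and "C' = diag_mat s"
  have "C ** C' = mat 1"
    using s by (simp add: C_def C'_def vec_eq_iff mat_def diag_mat_nth)
  have inverse: "(C ** H) ** (transpose H ** C') = mat 1"
    using HH \<open>C ** C' = mat 1\<close> by (metis matrix_mul_assoc matrix_mul_rid)
  have "trans_mat w = C ** S ** C'"
    using s by (simp add: vec_eq_iff trans_mat_def C_def C'_def S_def field_simps)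
  also have "\<dots> = (C ** H) ** diag_mat \<mu> ** (transpose H ** C')"
    by (simp add: S_diag matrix_mul_assoc)
  finally have "charpoly (trans_mat w) = (\<Prod>i\<in>UNIV. [:- \<mu> i, 1:])"
    by (rule charpoly_diagonalizable[OF inverse])
  define e where "e i u = H $ u $ i / s u" for i u
  define y :: "('a \<Rightarrow> real) \<Rightarrow> real^'a" where "y g = (\<chi> u. s u * g u)" for g
  have coordinate: "deg_inner w (e i) g = (transpose H *v y g) $ i" for i g
    using s by (simp add: deg_inner_def e_def y_def matrix_vector_mult_def transpose_def field_simps flip: s(2))
  have "deg_inner w (e i) (e j) = (if i = j then 1 else 0)" for i j
  proof -
    have "deg_inner w (e i) (e j) = (transpose H ** H) $ i $ j"
      using s by (simp add: deg_inner_def e_def matrix_matrix_mult_def transpose_def field_simps flip: s(2))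
    then show ?thesis by (simp add: HH mat_def)
  qed
  moreover have "adj_form w g = (\<Sum>i\<in>UNIV. \<mu> i * (deg_inner w (e i) g)\<^sup>2)" for g
  proof -
    have "adj_form w g = y g \<bullet> (S *v y g)"
      using s by (simp add: adj_form_def S_def y_def inner_vec_def matrix_vector_mult_def sum_distrib_left field_simps)
    then show ?thesis
      by (simp add: S_diag inner_diagonalized coordinate)
  qed
  moreover have "deg_inner w g g = (\<Sum>i\<in>UNIV. (deg_inner w (e i) g)\<^sup>2)" for g
  proof -
    have "H ** diag_mat (\<lambda>_. 1) ** transpose H = mat 1"
      using HH by (simp add: diag_mat_def mat_def[symmetric])
    moreover have "deg_inner w g g = y g \<bullet> y g"
      by (simp add: deg_inner_def y_def inner_vec_def mult_ac flip: s(2))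
    ultimately have "deg_inner w g g = y g \<bullet> ((H ** diag_mat (\<lambda>_. 1) ** transpose H) *v y g)"
      by simp
    then show ?thesis
      by (simp add: inner_diagonalized coordinate)
  qed
  ultimately show thesis
    using that \<open>charpoly (trans_mat w) = _\<close> by blast
qed

lemma rayleigh_ge_second_eigenvalue_on_some_plane:
  fixes w :: "'a::finite \<Rightarrow> 'a \<Rightarrow> real"
  assumes sym: "\<And>u x. w u x = w x u" and pos: "\<And>u. wdeg w u > 0" and "CARD('a) \<ge> 2"
  obtains f\<^sub>1 f\<^sub>2 where
    "\<And>a b. deg_inner w (\<lambda>u. a * f\<^sub>1 u + b * f\<^sub>2 u) (\<lambda>u. a * f\<^sub>1 u + b * f\<^sub>2 u) = a\<^sup>2 + b\<^sup>2"
    "\<And>a b. second_eigenvalue (trans_mat w) * deg_inner w (\<lambda>u. a * f\<^sub>1 u + b * f\<^sub>2 u) (\<lambda>u. a * f\<^sub>1 u + b * f\<^sub>2 u)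
       \<le> adj_form w (\<lambda>u. a * f\<^sub>1 u + b * f\<^sub>2 u)"
proof -
  obtain \<mu> :: "'a \<Rightarrow> real" and e where charpoly: "charpoly (trans_mat w) = (\<Prod>i\<in>UNIV. [:- \<mu> i, 1:])"
    and orthonormal: "\<And>i j. deg_inner w (e i) (e j) = (if i = j then 1 else 0)"
    and adj: "\<And>g. adj_form w g = (\<Sum>i\<in>UNIV. \<mu> i * (deg_inner w (e i) g)\<^sup>2)"
    and deg: "\<And>g. deg_inner w g g = (\<Sum>i\<in>UNIV. (deg_inner w (e i) g)\<^sup>2)"
    by (rule network_spectral_decomposition[OF sym pos], rule that)
  define l\<^sub>2 where "l\<^sub>2 = second_eigenvalue (trans_mat w)"
  obtain i j where "i \<noteq> j" "l\<^sub>2 \<le> \<mu> i" "l\<^sub>2 \<le> \<mu> j"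
    unfolding l\<^sub>2_def by (rule second_eigenvalue_attained[OF charpoly \<open>CARD('a) \<ge> 2\<close>])
  define g where "g a b = (\<lambda>u. a * e i u + b * e j u)" for a b
  have coefficient: "(deg_inner w (e k) (g a b))\<^sup>2 = (if k = i then a\<^sup>2 else 0) + (if k = j then b\<^sup>2 else 0)" for k a b
    using \<open>i \<noteq> j\<close> by (simp add: g_def deg_inner_linear_right orthonormal)
  have "deg_inner w (g a b) (g a b) = a\<^sup>2 + b\<^sup>2" for a b
    by (simp add: deg coefficient sum.distrib)
  moreover have "l\<^sub>2 * deg_inner w (g a b) (g a b) \<le> adj_form w (g a b)" for a b
  proof -
    have "adj_form w (g a b) = \<mu> i * a\<^sup>2 + \<mu> j * b\<^sup>2"
      by (simp add: adj coefficient distrib_left sum.distrib if_distrib[of "times _"] cong: if_cong)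
    then show ?thesis
      using \<open>l\<^sub>2 \<le> \<mu> i\<close> \<open>l\<^sub>2 \<le> \<mu> j\<close> \<open>deg_inner w (g a b) (g a b) = a\<^sup>2 + b\<^sup>2\<close>
      by (simp add: distrib_left add_mono mult_right_mono)
  qed
  ultimately show thesis
    using that[of "e i" "e j"] unfolding g_def l\<^sub>2_def by blast
qed

lemma rayleigh_le_second_eigenvalue_in_every_plane:
  fixes w :: "'a::finite \<Rightarrow> 'a \<Rightarrow> real"
  assumes sym: "\<And>u x. w u x = w x u" and pos: "\<And>u. wdeg w u > 0"
  obtains a b where "(a, b) \<noteq> (0, 0)"
    "adj_form w (\<lambda>u. a * f\<^sub>1 u + b * f\<^sub>2 u)
       \<le> second_eigenvalue (trans_mat w) * deg_inner w (\<lambda>u. a * f\<^sub>1 u + b * f\<^sub>2 u) (\<lambda>u. a * f\<^sub>1 u + b * f\<^sub>2 u)"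
proof -
  obtain \<mu> :: "'a \<Rightarrow> real" and e where charpoly: "charpoly (trans_mat w) = (\<Prod>i\<in>UNIV. [:- \<mu> i, 1:])"
    and "\<And>i j. deg_inner w (e i) (e j) = (if i = j then 1 else 0)"
    and adj: "\<And>g. adj_form w g = (\<Sum>i\<in>UNIV. \<mu> i * (deg_inner w (e i) g)\<^sup>2)"
    and deg: "\<And>g. deg_inner w g g = (\<Sum>i\<in>UNIV. (deg_inner w (e i) g)\<^sup>2)"
    by (rule network_spectral_decomposition[OF sym pos], rule that)
  define l\<^sub>2 where "l\<^sub>2 = second_eigenvalue (trans_mat w)"
  have "Max (range \<mu>) \<in> range \<mu>"
    by (rule Max_in) auto
  then obtain k where "Max (range \<mu>) = \<mu> k"
    by (rule rangeE)
  then have k_max: "\<mu> m \<le> \<mu> k" for m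
    using Max_ge[of "range \<mu>" "\<mu> m"] by simp
  \<comment> \<open>Only the top eigenvalue can exceed the second one, so it suffices to kill the coefficient at k.\<close>
  have "\<mu> m \<le> l\<^sub>2" if "m \<noteq> k" for m
    using min_le_second_eigenvalue[OF charpoly that] k_max[of m] unfolding l\<^sub>2_def by simp
  define p q where "p = deg_inner w (e k) f\<^sub>1" and "q = deg_inner w (e k) f\<^sub>2"
  obtain a b where "(a, b) \<noteq> (0, 0)" "a * p + b * q = 0"
  proof (cases "p = 0 \<and> q = 0")
    case True
    then show thesis by (intro that[of 1 0]) auto
  next
    case False
    then show thesis by (intro that[of q "- p"]) (auto simp: algebra_simps)
  qed
  define g where "g = (\<lambda>u. a * f\<^sub>1 u + b * f\<^sub>2 u)"
  have "deg_inner w (e k) g = 0"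
    using \<open>a * p + b * q = 0\<close> by (simp add: g_def p_def q_def deg_inner_linear_right)
  have "\<mu> m * (deg_inner w (e m) g)\<^sup>2 \<le> l\<^sub>2 * (deg_inner w (e m) g)\<^sup>2" for m
    using \<open>deg_inner w (e k) g = 0\<close> \<open>m \<noteq> k \<Longrightarrow> \<mu> m \<le> l\<^sub>2\<close>
    by (cases "m = k") (auto intro: mult_right_mono)
  then have "adj_form w g \<le> l\<^sub>2 * deg_inner w g g"
    unfolding adj deg sum_distrib_left by (rule sum_mono)
  with \<open>(a, b) \<noteq> (0, 0)\<close> show thesis
    using that unfolding g_def l\<^sub>2_def by blast
qed

lemma wdeg_pos:
  fixes w :: "'a::finite \<Rightarrow> 'a \<Rightarrow> real"
  assumes "network w" and "CARD('a) \<ge> 2"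
  shows "wdeg w u > 0"
proof -
  have "\<not> (UNIV :: 'a set) \<subseteq> {u}"
  proof
    assume "(UNIV :: 'a set) \<subseteq> {u}"
    then have "CARD('a) \<le> card {u}"
      by (intro card_mono) auto
    with assms(2) show False by simp
  qed
  then obtain x :: 'a where "x \<noteq> u"
    by blast
  have "(\<lambda>a b. a \<noteq> b \<and> 0 < w a b)\<^sup>*\<^sup>* u x"
    using assms(1) by (simp add: network_def)
  then obtain y where "0 < w u y"
    using \<open>x \<noteq> u\<close> by (cases rule: converse_rtranclpE) auto
  also have "w u y \<le> wdeg w u"
    unfolding wdeg_def using assms(1) by (intro member_le_sum) (auto simp: network_def)
  finally show ?thesis .
qed

lemma adj_form_le_deg_inner:
  fixes w :: "'a::finite \<Rightarrow> 'a \<Rightarrow> real"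
  assumes sym: "\<And>u x. w u x = w x u" and nonneg: "\<And>u x. 0 \<le> w u x"
  shows "adj_form w g \<le> deg_inner w g g"
proof -
  have "adj_form w g \<le> (\<Sum>u\<in>UNIV. \<Sum>x\<in>UNIV. w u x * ((g u)\<^sup>2 + (g x)\<^sup>2) / 2)"
    unfolding adj_form_def
  proof (intro sum_mono)
    fix u x
    have "w u x * (2 * (g u * g x)) \<le> w u x * ((g u)\<^sup>2 + (g x)\<^sup>2)"
      using nonneg sum_squares_bound[of "g u" "g x"] by (intro mult_left_mono) simp_all
    then show "w u x * g u * g x \<le> w u x * ((g u)\<^sup>2 + (g x)\<^sup>2) / 2"
      by (simp add: algebra_simps)
  qed
  also have "\<dots> = ((\<Sum>u\<in>UNIV. \<Sum>x\<in>UNIV. w u x * (g u)\<^sup>2) + (\<Sum>u\<in>UNIV. \<Sum>x\<in>UNIV. w u x * (g x)\<^sup>2)) / 2"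
    by (simp add: sum_divide_distrib sum.distrib algebra_simps add_divide_distrib)
  also have "(\<Sum>u\<in>UNIV. \<Sum>x\<in>UNIV. w u x * (g x)\<^sup>2) = (\<Sum>u\<in>UNIV. \<Sum>x\<in>UNIV. w u x * (g u)\<^sup>2)"
    by (subst sum.swap) (simp add: sym)
  also have "(\<Sum>u\<in>UNIV. \<Sum>x\<in>UNIV. w u x * (g u)\<^sup>2) = deg_inner w g g"
    by (simp add: deg_inner_def wdeg_def sum_distrib_left power2_eq_square mult_ac)
  finally show ?thesis by simp
qed

lemma wdeg_add_loop:
  assumes "\<And>u x. w' u x = w u x + (if u = v \<and> x = v then t else 0)"
  shows "wdeg w' u = wdeg w u + (if u = v then t else 0)"
  by (simp add: wdeg_def assms sum.distrib)

lemma adj_form_add_loop: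
  assumes "\<And>u x. w' u x = w u x + (if u = v \<and> x = v then t else 0)"
  shows "adj_form w' g = adj_form w g + t * (g v)\<^sup>2"
proof -
  have "w' u x * g u * g x = w u x * g u * g x + (if x = v then if u = v then t * (g v)\<^sup>2 else 0 else 0)" for u x
    by (simp add: assms power2_eq_square algebra_simps)
  then show ?thesis
    by (simp add: adj_form_def sum.distrib)
qed

lemma deg_inner_add_loop:
  assumes "\<And>u x. w' u x = w u x + (if u = v \<and> x = v then t else 0)"
  shows "deg_inner w' g g = deg_inner w g g + t * (g v)\<^sup>2"
proof -
  have "wdeg w' u * g u * g u = wdeg w u * g u * g u + (if u = v then t * (g v)\<^sup>2 else 0)" for u
    by (simp add: wdeg_add_loop[OF assms] power2_eq_square algebra_simps)
  then show ?thesis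
    by (simp add: deg_inner_def sum.distrib)
qed

lemma second_eigenvalue_le_1:
  fixes w :: "'a::finite \<Rightarrow> 'a \<Rightarrow> real"
  assumes sym: "\<And>u x. w u x = w x u" and nonneg: "\<And>u x. 0 \<le> w u x"
    and pos: "\<And>u. wdeg w u > 0" and "CARD('a) \<ge> 2"
  shows "second_eigenvalue (trans_mat w) \<le> 1"
proof -
  obtain f\<^sub>1 f\<^sub>2 :: "'a \<Rightarrow> real" where
    "\<And>a b. deg_inner w (\<lambda>u. a * f\<^sub>1 u + b * f\<^sub>2 u) (\<lambda>u. a * f\<^sub>1 u + b * f\<^sub>2 u) = a\<^sup>2 + b\<^sup>2"
    "\<And>a b. second_eigenvalue (trans_mat w) * deg_inner w (\<lambda>u. a * f\<^sub>1 u + b * f\<^sub>2 u) (\<lambda>u. a * f\<^sub>1 u + b * f\<^sub>2 u)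
       \<le> adj_form w (\<lambda>u. a * f\<^sub>1 u + b * f\<^sub>2 u)"
    by (rule rayleigh_ge_second_eigenvalue_on_some_plane[OF sym pos \<open>CARD('a) \<ge> 2\<close>], rule that)
  from this(1)[of 1 0] this(2)[of 1 0] show ?thesis
    using adj_form_le_deg_inner[of w f\<^sub>1, OF sym nonneg] by simp
qed

lemma second_eigenvalue_mono_add_loop:
  fixes w w' :: "'a::finite \<Rightarrow> 'a \<Rightarrow> real"
  assumes sym: "\<And>u x. w u x = w x u" and nonneg: "\<And>u x. 0 \<le> w u x"
    and pos: "\<And>u. wdeg w u > 0" and "CARD('a) \<ge> 2" and "t \<ge> 0"
    and loop: "\<And>u x. w' u x = w u x + (if u = v \<and> x = v then t else 0)"
  shows "second_eigenvalue (trans_mat w) \<le> second_eigenvalue (trans_mat w')"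
proof -
  have sym': "w' u x = w' x u" for u x
    by (simp add: loop sym[of u x] conj_commute)
  have pos': "\<And>u. wdeg w' u > 0"
    using pos \<open>t \<ge> 0\<close> by (simp add: wdeg_add_loop[OF loop] add_pos_nonneg)
  obtain f\<^sub>1 f\<^sub>2 where
    unit: "\<And>a b. deg_inner w (\<lambda>u. a * f\<^sub>1 u + b * f\<^sub>2 u) (\<lambda>u. a * f\<^sub>1 u + b * f\<^sub>2 u) = a\<^sup>2 + b\<^sup>2" and
    above: "\<And>a b. second_eigenvalue (trans_mat w) * deg_inner w (\<lambda>u. a * f\<^sub>1 u + b * f\<^sub>2 u) (\<lambda>u. a * f\<^sub>1 u + b * f\<^sub>2 u)
       \<le> adj_form w (\<lambda>u. a * f\<^sub>1 u + b * f\<^sub>2 u)"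
    by (rule rayleigh_ge_second_eigenvalue_on_some_plane[OF sym pos \<open>CARD('a) \<ge> 2\<close>], rule that)
  obtain a b where "(a, b) \<noteq> (0, 0)" and below:
    "adj_form w' (\<lambda>u. a * f\<^sub>1 u + b * f\<^sub>2 u)
       \<le> second_eigenvalue (trans_mat w') * deg_inner w' (\<lambda>u. a * f\<^sub>1 u + b * f\<^sub>2 u) (\<lambda>u. a * f\<^sub>1 u + b * f\<^sub>2 u)"
    by (rule rayleigh_le_second_eigenvalue_in_every_plane[OF sym' pos'], rule that)
  define l l' where "l = second_eigenvalue (trans_mat w)" and "l' = second_eigenvalue (trans_mat w')"
  define g where "g = (\<lambda>u. a * f\<^sub>1 u + b * f\<^sub>2 u)"
  have "l \<le> 1"
    unfolding l_def using second_eigenvalue_le_1[OF sym nonneg pos \<open>CARD('a) \<ge> 2\<close>] .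
  have "l * deg_inner w' g g = l * deg_inner w g g + l * (t * (g v)\<^sup>2)"
    by (simp add: deg_inner_add_loop[OF loop] distrib_left)
  also have "\<dots> \<le> adj_form w g + t * (g v)\<^sup>2"
  proof (rule add_mono)
    show "l * deg_inner w g g \<le> adj_form w g"
      using above[of a b] by (simp add: g_def l_def)
    show "l * (t * (g v)\<^sup>2) \<le> t * (g v)\<^sup>2"
      using mult_right_mono[of l 1 "t * (g v)\<^sup>2"] \<open>l \<le> 1\<close> \<open>t \<ge> 0\<close> by simp
  qed
  also have "\<dots> = adj_form w' g"
    by (simp add: adj_form_add_loop[OF loop])
  finally have "l * deg_inner w' g g \<le> l' * deg_inner w' g g"
    using below by (simp add: g_def l'_def)
  moreover have "deg_inner w' g g > 0"
    using unit[of a b] \<open>(a, b) \<noteq> (0, 0)\<close> \<open>t \<ge> 0\<close>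
    by (simp add: deg_inner_add_loop[OF loop] g_def add_pos_nonneg sum_power2_gt_zero_iff)
  ultimately show ?thesis
    unfolding l_def l'_def by (rule mult_right_le_imp_le)
qed

theorem claim2p7:
  fixes w0 w1 :: "'a::finite \<Rightarrow> 'a \<Rightarrow> real" and v :: 'a
  assumes "CARD('a) \<ge> 2"
    and "network w0" and "network w1"
    and "w0 v v < w1 v v"
    and "\<forall>u x. (u, x) \<noteq> (v, v) \<longrightarrow> w0 u x = w1 u x"
  shows "spectral_gap w1 \<le> spectral_gap w0"
proof -
  have sym: "\<And>u x. w0 u x = w0 x u" and nonneg: "\<And>u x. 0 \<le> w0 u x"
    using assms(2) by (auto simp: network_def)
  have loop: "w1 u x = w0 u x + (if u = v \<and> x = v then w1 v v - w0 v v else 0)" for u x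
    using assms(5) by auto
  have "second_eigenvalue (trans_mat w0) \<le> second_eigenvalue (trans_mat w1)"
    using assms(4)
    by (intro second_eigenvalue_mono_add_loop[OF sym nonneg wdeg_pos[OF assms(2,1)] assms(1) _ loop]) simp
  then show ?thesis
    by (simp add: spectral_gap_def)
qed

end
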